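(* Let $q$ be a prime power, $v\ge2$, and let $u,m\ge0$ and $\Delta\ge1$ be integers. Let $\mathcal{C}$ be a set of points of $\mathrm{PG}(v-1,q)$ with $|\mathcal{C}|=u+m\Delta$ such that every hyperplane $H$ satisfies $|\mathcal{C}\cap H|\in\{u,u+\Delta,\dots,u+m\Delta\}$. Then $u<\frac{m\Delta}{q-1}$ or $u=m=0$.
   Context: $\mathrm{PG}(v-1,q)$ is the set of $1$-dimensional subspaces (points) of $\mathbb{F}_q^v$; hyperplanes are the $(v-1)$-dimensional subspaces of $\mathbb{F}_q^v$, and $\mathcal{C}\cap H$ is the set of points of $\mathcal{C}$ contained in $H$. *)

theory Defs
  imports Complex_Main "HOL-Library.Function_Algebras"
begin

text \<open>Ambient space F_q^v modelled as functions 'n \<Rightarrow> 'a with 'n finite, card (UNIV :: 'n set) = v,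
  and 'a a finite field with q = CARD('a).\<close>

definition fscale :: "'a::field \<Rightarrow> ('n \<Rightarrow> 'a) \<Rightarrow> ('n \<Rightarrow> 'a)" where
  "fscale c x = (\<lambda>i. c * x i)"

definition pg_points :: "('n::finite \<Rightarrow> 'a::{finite,field}) set set" where
  "pg_points = {S. module.subspace fscale S \<and> vector_space.dim fscale S = 1}"

definition pg_hyperplanes :: "('n::finite \<Rightarrow> 'a::{finite,field}) set set" where
  "pg_hyperplanes = {S. module.subspace fscale S \<and> vector_space.dim fscale S = card (UNIV :: 'n set) - 1}"

end

theory Submission
  imports Defs "HOL-Library.Cardinality" "HOL-Library.FuncSet"
begin

text \<open>Double count the incidences between the points of C and the q^v - 1 nonzero linear
  functionals c, a point being incident with c when it lies in the kernel of c. The kernel of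
  every such c is a hyperplane, so it contains at least u points of C; dually, the functionals
  vanishing on a fixed nonzero vector form a hyperplane of the dual space, so every point is
  incident with at most q^(v-1) - 1 of them. Hence u (q^v - 1) \<le> (u + m\<Delta>) (q^(v-1) - 1), i.e.
  u q^(v-1) (q - 1) \<le> m\<Delta> (q^(v-1) - 1), which gives u (q - 1) < m\<Delta> unless m\<Delta> = 0, and
  then u = 0.\<close>

lemma sum_fun_apply: "(\<Sum>v\<in>T. f v) i = (\<Sum>v\<in>T. f v i)"
  by (induction T rule: infinite_finite_induct) auto

interpretation fscale: vector_space "fscale :: 'a::field \<Rightarrow> ('n \<Rightarrow> 'a) \<Rightarrow> _"
  by unfold_locales (auto simp: fscale_def fun_eq_iff algebra_simps)

definition unit_vec :: "'n \<Rightarrow> 'n \<Rightarrow> 'a::zero_neq_one" where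
  "unit_vec i = (\<lambda>k. if k = i then 1 else 0)"

lemma inj_unit_vec: "inj unit_vec"
  by (rule injI) (metis unit_vec_def one_neq_zero)

lemma sum_fscale_unit_vec:
  "(\<Sum>j\<in>UNIV. fscale (x j) (unit_vec j :: 'n::finite \<Rightarrow> 'a::field)) = x"
  by (simp add: fun_eq_iff sum_fun_apply fscale_def unit_vec_def if_distrib cong: if_cong)

lemma independent_unit_vec:
  "fscale.independent (range (unit_vec :: 'n::finite \<Rightarrow> 'n \<Rightarrow> 'a::field))"
proof (rule fscale.independent_if_scalars_zero)
  fix u :: "('n \<Rightarrow> 'a) \<Rightarrow> 'a" and v :: "'n \<Rightarrow> 'a"
  assume zero: "(\<Sum>w\<in>range unit_vec. fscale (u w) w) = 0" and "v \<in> range unit_vec"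
  then obtain i where v: "v = unit_vec i" by blast
  have "(\<Sum>j\<in>UNIV. fscale (u (unit_vec j)) (unit_vec j)) = 0"
    using zero by (simp add: sum.reindex[OF inj_unit_vec])
  then have "(\<lambda>j. u (unit_vec j)) = 0"
    by (simp only: sum_fscale_unit_vec)
  then show "u v = 0"
    using v by (metis zero_fun_def)
qed simp

lemma span_unit_vec: "fscale.span (range (unit_vec :: 'n::finite \<Rightarrow> 'n \<Rightarrow> 'a::field)) = UNIV"
proof -
  have "x \<in> fscale.span (range unit_vec)" for x :: "'n \<Rightarrow> 'a"
    by (subst sum_fscale_unit_vec[symmetric])
      (intro fscale.span_sum fscale.span_scale fscale.span_base rangeI)
  then show ?thesis by auto
qed

interpretation fscale: finite_dimensional_vector_space
  "fscale :: 'a::field \<Rightarrow> ('n::finite \<Rightarrow> 'a) \<Rightarrow> _" "range unit_vec"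
  by unfold_locales (auto simp: independent_unit_vec span_unit_vec)

lemma dim_UNIV_fscale: "fscale.dim (UNIV :: ('n::finite \<Rightarrow> 'a::field) set) = CARD('n)"
  by (simp add: card_image[OF inj_unit_vec])

definition hyperplane_of :: "('n::finite \<Rightarrow> 'a::field) \<Rightarrow> ('n \<Rightarrow> 'a) set" where
  "hyperplane_of c = {x. (\<Sum>i\<in>UNIV. c i * x i) = 0}"

lemma mem_hyperplane_of_commute: "x \<in> hyperplane_of c \<longleftrightarrow> c \<in> hyperplane_of x"
  by (simp add: hyperplane_of_def mult.commute)

lemma subspace_hyperplane_of: "fscale.subspace (hyperplane_of c)"
  unfolding fscale.subspace_def hyperplane_of_def
  by (auto simp: fscale_def algebra_simps sum.distrib simp flip: sum_distrib_left)

lemma span_insert_unit_vec_hyperplane_of: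
  assumes "c j \<noteq> 0"
  shows "fscale.span (insert (unit_vec j) (hyperplane_of c)) = UNIV"
proof -
  have "y \<in> fscale.span (insert (unit_vec j) (hyperplane_of c))" for y
  proof -
    define t where "t = (\<Sum>i\<in>UNIV. c i * y i) / c j"
    have "(\<Sum>i\<in>UNIV. c i * fscale t (unit_vec j) i) = t * c j"
      by (simp add: fscale_def unit_vec_def if_distrib cong: if_cong)
    then have "(\<Sum>i\<in>UNIV. c i * (y - fscale t (unit_vec j)) i) = 0"
      using assms by (simp add: t_def right_diff_distrib sum_subtractf)
    then have "y - fscale t (unit_vec j) \<in> hyperplane_of c"
      by (simp add: hyperplane_of_def)
    then have "(y - fscale t (unit_vec j)) + fscale t (unit_vec j)
        \<in> fscale.span (insert (unit_vec j) (hyperplane_of c))"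
      by (intro fscale.span_add fscale.span_scale fscale.span_base) auto
    then show ?thesis by simp
  qed
  then show ?thesis by auto
qed

lemma hyperplane_of_in_pg_hyperplanes:
  fixes c :: "'n::finite \<Rightarrow> 'a::{finite,field}"
  assumes "c \<noteq> 0"
  shows "hyperplane_of c \<in> pg_hyperplanes"
proof -
  let ?H = "hyperplane_of c"
  obtain j where j: "c j \<noteq> 0" using assms by (auto simp: fun_eq_iff)
  have "unit_vec j \<notin> ?H"
    using j by (simp add: hyperplane_of_def unit_vec_def if_distrib cong: if_cong)
  then have "fscale.span ?H \<noteq> fscale.span UNIV"
    by (auto simp only: fscale.span_UNIV
        fscale.span_eq_iff[THEN iffD2, OF subspace_hyperplane_of])
  then have "\<not> fscale.dim (UNIV :: ('n \<Rightarrow> 'a) set) \<le> fscale.dim ?H"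
    using fscale.dim_eq_span[OF subset_UNIV, of ?H] by blast
  then have "\<not> CARD('n) \<le> fscale.dim ?H"
    by (simp only: dim_UNIV_fscale not_False_eq_True)
  moreover have "CARD('n) \<le> fscale.dim ?H + 1"
  proof -
    have "CARD('n) = fscale.dim (UNIV :: ('n \<Rightarrow> 'a) set)"
      by (rule dim_UNIV_fscale[symmetric])
    also have "\<dots> \<le> fscale.dim (insert (unit_vec j) ?H)"
      by (rule fscale.dim_mono) (simp add: span_insert_unit_vec_hyperplane_of[of c j, OF j])
    also have "\<dots> \<le> fscale.dim ?H + 1"
      by (simp add: fscale.dim_insert)
    finally show ?thesis .
  qed
  ultimately show ?thesis
    by (simp add: pg_hyperplanes_def subspace_hyperplane_of)
qed

lemma card_hyperplane_of_le:
  fixes x :: "'n::finite \<Rightarrow> 'a::{finite,field}"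
  assumes "x \<noteq> 0"
  shows "card (hyperplane_of x) \<le> CARD('a) ^ (CARD('n) - 1)"
proof -
  obtain j where j: "x j \<noteq> 0" using assms by (auto simp: fun_eq_iff)
  have coord_j: "c j * x j = - (\<Sum>i\<in>UNIV - {j}. c i * x i)" if "c \<in> hyperplane_of x" for c
    using that sum.remove[of UNIV j "\<lambda>i. c i * x i"]
    by (simp add: hyperplane_of_def mult.commute eq_neg_iff_add_eq_0)
  have "inj_on (\<lambda>c. restrict c (- {j})) (hyperplane_of x)"
  proof (rule inj_onI)
    fix c c' assume c: "c \<in> hyperplane_of x" and c': "c' \<in> hyperplane_of x"
      and eq: "restrict c (- {j}) = restrict c' (- {j})"
    then have off_j: "c i = c' i" if "i \<noteq> j" for i
      using that by (metis ComplI restrict_apply' singletonD)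
    then have "(\<Sum>i\<in>UNIV - {j}. c i * x i) = (\<Sum>i\<in>UNIV - {j}. c' i * x i)"
      by (intro sum.cong) auto
    then have "c j * x j = c' j * x j"
      using coord_j[OF c] coord_j[OF c'] by simp
    then have "c j = c' j"
      using j by simp
    with off_j show "c = c'" by (metis ext)
  qed
  then have "card (hyperplane_of x) \<le> card (PiE (- {j}) (\<lambda>_. UNIV :: 'a set))"
    by (rule card_inj_on_le) (auto simp: finite_PiE)
  also have "\<dots> = CARD('a) ^ (CARD('n) - 1)"
    by (simp add: card_PiE Compl_eq_Diff_UNIV card_Diff_singleton)
  finally show ?thesis .
qed

lemma card_functionals_vanishing_on_pg_point:
  fixes P :: "('n::finite \<Rightarrow> 'a::{finite,field}) set"
  assumes "P \<in> pg_points"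
  shows "card {c. c \<noteq> 0 \<and> P \<subseteq> hyperplane_of c} \<le> CARD('a) ^ (CARD('n) - 1) - 1"
proof -
  have "fscale.dim P \<noteq> 0"
    using assms by (simp add: pg_points_def)
  then obtain x where x: "x \<in> P" "x \<noteq> 0"
    by (auto simp only: fscale.dim_eq_0)
  have "{c. c \<noteq> 0 \<and> P \<subseteq> hyperplane_of c} \<subseteq> hyperplane_of x - {0}"
    using x(1) by (auto simp: mem_hyperplane_of_commute)
  then have "card {c. c \<noteq> 0 \<and> P \<subseteq> hyperplane_of c} \<le> card (hyperplane_of x - {0})"
    by (rule card_mono[rotated]) simp
  also have "\<dots> = card (hyperplane_of x) - 1"
    by (simp add: hyperplane_of_def)
  also have "\<dots> \<le> CARD('a) ^ (CARD('n) - 1) - 1"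
    using card_hyperplane_of_le[OF x(2)] by simp
  finally show ?thesis .
qed

lemma double_counting_le:
  fixes R :: "'a \<Rightarrow> 'b \<Rightarrow> bool"
  assumes "finite A" "finite B"
    and "\<And>a. a \<in> A \<Longrightarrow> s \<le> card {b \<in> B. R a b}"
    and "\<And>b. b \<in> B \<Longrightarrow> card {a \<in> A. R a b} \<le> t"
  shows "card A * s \<le> card B * t"
proof -
  have "card A * s \<le> (\<Sum>a\<in>A. card {b \<in> B. R a b})"
    using sum_mono[of A "\<lambda>_. s"] assms(3) by simp
  also have "\<dots> = (\<Sum>a\<in>A. \<Sum>b\<in>B. if R a b then 1 else 0)"
    using assms(2) by (simp add: sum.inter_filter[symmetric])
  also have "\<dots> = (\<Sum>b\<in>B. \<Sum>a\<in>A. if R a b then 1 else 0)"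
    by (rule sum.swap)
  also have "\<dots> = (\<Sum>b\<in>B. card {a \<in> A. R a b})"
    using assms(1) by (simp add: sum.inter_filter[symmetric])
  also have "\<dots> \<le> card B * t"
    using sum_mono[of B _ "\<lambda>_. t"] assms(4) by simp
  finally show ?thesis .
qed

lemma less_div_of_incidence_bound:
  fixes u M q k :: nat
  assumes "q \<ge> 2" and "u * (q ^ Suc k - 1) \<le> (u + M) * (q ^ k - 1)"
  shows "real u < real M / (real q - 1) \<or> (u = 0 \<and> M = 0)"
proof -
  define Q where "Q = real q ^ k"
  have "Q \<ge> 1" using assms(1) by (simp add: Q_def)
  have "real (q ^ Suc k - 1) = real q * Q - 1" "real (q ^ k - 1) = Q - 1"
    using assms(1) by (subst of_nat_diff; simp add: Q_def)+
  then have "real u * (real q * Q - 1) \<le> (real u + real M) * (Q - 1)"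
    using of_nat_mono[OF assms(2), where 'a=real] by (simp only: of_nat_mult of_nat_add)
  then have key: "real u * Q * (real q - 1) \<le> real M * (Q - 1)"
    by (simp add: algebra_simps)
  show ?thesis
  proof (cases "M = 0")
    case True
    then show ?thesis
      using key assms(1) \<open>Q \<ge> 1\<close> by (simp add: mult_le_0_iff)
  next
    case False
    then have "real u * (real q - 1) * Q < real M * Q"
      using key by (simp add: algebra_simps)
    then have "real u * (real q - 1) < real M"
      using \<open>Q \<ge> 1\<close> by simp
    moreover have "real q - 1 > 0"
      using assms(1) by simp
    ultimately show ?thesis
      by (simp add: pos_less_divide_eq)
  qed
qed

theorem corollary5p4:
  fixes C :: "('n::finite \<Rightarrow> 'a::{finite,field}) set set"
    and u m \<Delta> :: nat
  assumes "card (UNIV :: 'n set) \<ge> 2"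
    and "\<Delta> \<ge> 1"
    and "C \<subseteq> pg_points"
    and "card C = u + m * \<Delta>"
    and "\<forall>H \<in> pg_hyperplanes. card {P \<in> C. P \<subseteq> H} \<in> {u + k * \<Delta> | k. k \<le> m}"
  shows "real u < real (m * \<Delta>) / (real (card (UNIV :: 'a set)) - 1) \<or> (u = 0 \<and> m = 0)"
proof -
  \<comment> \<open>The counting argument works for every v \<ge> 1.\<close>
  let ?N = "{c :: 'n \<Rightarrow> 'a. c \<noteq> 0}"
  have q2: "CARD('a) \<ge> 2"
    using card_mono[of UNIV "{0, 1 :: 'a}"] by simp
  have "?N = UNIV - {0}"
    by auto
  then have "card ?N = CARD('a) ^ Suc (CARD('n) - 1) - 1"
    by (simp add: card_Diff_singleton card_fun Suc_diff_1[OF finite_UNIV_card_ge_0])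
  moreover have "card ?N * u \<le> card C * (CARD('a) ^ (CARD('n) - 1) - 1)"
  proof (rule double_counting_le[where R = "\<lambda>c P. P \<subseteq> hyperplane_of c"])
    show "u \<le> card {P \<in> C. P \<subseteq> hyperplane_of c}" if "c \<in> ?N" for c
      using that assms(5) hyperplane_of_in_pg_hyperplanes by fastforce
    show "card {c \<in> ?N. P \<subseteq> hyperplane_of c} \<le> CARD('a) ^ (CARD('n) - 1) - 1"
      if "P \<in> C" for P
      using that assms(3) card_functionals_vanishing_on_pg_point by auto
  qed simp_all
  ultimately have "u * (CARD('a) ^ Suc (CARD('n) - 1) - 1)
      \<le> (u + m * \<Delta>) * (CARD('a) ^ (CARD('n) - 1) - 1)"
    by (metis assms(4) mult.commute)
  then have "real u < real (m * \<Delta>) / (real CARD('a) - 1) \<or> (u = 0 \<and> m * \<Delta> = 0)"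
    by (rule less_div_of_incidence_bound[OF q2])
  moreover have "m * \<Delta> = 0 \<Longrightarrow> m = 0"
    using assms(2) by simp
  ultimately show ?thesis
    by blast
qed

end
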